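(* Let $r\geq 3$ be an integer, let $a,b$ be rational numbers with $0<a\leq b$, and set $h:=a+(r-1)b$. If $G$ is a balanced $r$-partite graph on $rn$ vertices with $\delta^*(G)\geq (1-b/h)n$, then $G$ admits a perfect $(a,b)$-weighted fractional $K_r$-tiling.
   Context: For an $r$-partite graph $G$ with vertex classes $V_1,\dots,V_r$, $G$ is balanced if all classes have the same size, and $\delta^*(G)$ is the largest integer $m$ such that for all $i\neq j$ every vertex of $V_i$ has at least $m$ neighbours in $V_j$. A rooted copy of $K_r$ in $G$ is a copy of $K_r$ with one vertex designated as the root. For an $(a,b)$-weighted rooted copy $K$ of $K_r$, its weighted characteristic vector $\mathbf 1_{a,b,G}(K)\in\mathbb R^{V(G)}$ has entry $a$ at the root, entry $b$ at each other vertex of $K$, and $0$ elsewhere. Let $\mathcal K_{a,b,r}(G)$ be the set of all rooted copies of $K_r$ in $G$ (with this weighting). An $(a,b)$-weighted fractional $K_r$-tiling of $G$ is an assignment of weights $w(K)\geq 0$ to $K\in\mathcal K_{a,b,r}(G)$ such that $\sum_{K}w(K)\mathbf 1_{a,b,G}(K)\leq \mathbf 1$ pointwise (where $\mathbf 1$ is the all-ones vector); it is perfect if equality holds in every coordinate. *)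

theory Defs
  imports Complex_Main
begin

definition simple_graph :: "'a set \<Rightarrow> ('a \<Rightarrow> 'a \<Rightarrow> bool) \<Rightarrow> bool" where
  "simple_graph Vs E \<longleftrightarrow> finite Vs \<and> (\<forall>u v. E u v \<longrightarrow> u \<in> Vs \<and> v \<in> Vs)
     \<and> (\<forall>u v. E u v \<longrightarrow> E v u) \<and> (\<forall>u. \<not> E u u)"

definition balanced_r_partite ::
  "'a set \<Rightarrow> ('a \<Rightarrow> 'a \<Rightarrow> bool) \<Rightarrow> nat \<Rightarrow> nat \<Rightarrow> (nat \<Rightarrow> 'a set) \<Rightarrow> bool" where
  "balanced_r_partite Vs E r n P \<longleftrightarrow> simple_graph Vs E
     \<and> (\<Union>i<r. P i) = Vs
     \<and> (\<forall>i<r. \<forall>j<r. i \<noteq> j \<longrightarrow> P i \<inter> P j = {})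
     \<and> (\<forall>i<r. card (P i) = n)
     \<and> (\<forall>i<r. \<forall>u\<in>P i. \<forall>v\<in>P i. \<not> E u v)"

definition delta_star :: "('a \<Rightarrow> 'a \<Rightarrow> bool) \<Rightarrow> nat \<Rightarrow> (nat \<Rightarrow> 'a set) \<Rightarrow> nat" where
  "delta_star E r P = (GREATEST m. \<forall>i<r. \<forall>j<r. i \<noteq> j \<longrightarrow>
        (\<forall>v\<in>P i. card {u \<in> P j. E v u} \<ge> m))"

definition rooted_Kr_copies :: "'a set \<Rightarrow> ('a \<Rightarrow> 'a \<Rightarrow> bool) \<Rightarrow> nat \<Rightarrow> ('a \<times> 'a set) set" where
  "rooted_Kr_copies Vs E r = {(x, S). S \<subseteq> Vs \<and> card S = r \<and> x \<in> S
       \<and> (\<forall>u\<in>S. \<forall>v\<in>S. u \<noteq> v \<longrightarrow> E u v)}"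

definition wchar :: "real \<Rightarrow> real \<Rightarrow> 'a \<times> 'a set \<Rightarrow> 'a \<Rightarrow> real" where
  "wchar a b K v = (if v = fst K then a else if v \<in> snd K then b else 0)"

definition perfect_weighted_fractional_tiling ::
  "'a set \<Rightarrow> ('a \<Rightarrow> 'a \<Rightarrow> bool) \<Rightarrow> nat \<Rightarrow> real \<Rightarrow> real \<Rightarrow> ('a \<times> 'a set \<Rightarrow> real) \<Rightarrow> bool" where
  "perfect_weighted_fractional_tiling Vs E r a b w \<longleftrightarrow>
     (\<forall>K\<in>rooted_Kr_copies Vs E r. w K \<ge> 0)
     \<and> (\<forall>v\<in>Vs. (\<Sum>K\<in>rooted_Kr_copies Vs E r. w K * wchar a b K v) = 1)"

end

theory Submission
  imports Defs
begin

text \<open>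
  By Farkas' lemma it suffices to find, for every vertex weighting y with negative total,
  a rooted copy K of K_r whose (a,b)-weighted y-value is negative; we find one whose value
  is at most h/(rn) times the total, where h = a + (r - 1) b. Write b/h = p/q and list each
  class in increasing order of y, every vertex repeated q times. Cut the nq slots into r
  consecutive bands, r - 1 of length pn and a last one of length nq - (r - 1)pn, so that the
  weights b, ..., b, a are proportional to the band lengths. Assigning the classes to the
  bands by a rotation and picking in each band a slot of at most average value, some rotation
  yields thresholds Y_t with r \<Sum>_t w_t Y_t \<le> (h/n) \<Sum> y. The slot picked in band t lies
  beyond t pn \<ge> t m q, where m = n - \<delta>^*(G) \<le> (b/h) n bounds the non-neighbours of a
  vertex in another class; so more than t m vertices of the corresponding class lie below
  Y_t, and a transversal clique below the thresholds can be chosen greedily.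
\<close>

section \<open>Farkas' lemma\<close>

lemma farkas_lift_certificate:
  fixes A :: "'i \<Rightarrow> 'v \<Rightarrow> real" and c y y' :: "'v \<Rightarrow> real" and \<alpha> :: real
  assumes "\<alpha> = (\<Sum>v\<in>V. y v * A x v)"
    and "\<forall>i\<in>F. 0 \<le> (\<Sum>v\<in>V. y' v * ((\<Sum>u\<in>V. y u * A i u) * A x v - \<alpha> * A i v))"
    and "(\<Sum>v\<in>V. y' v * ((\<Sum>u\<in>V. y u * c u) * A x v - \<alpha> * c v)) < 0"
  shows "\<exists>z. (\<forall>i\<in>insert x F. 0 \<le> (\<Sum>v\<in>V. z v * A i v)) \<and> (\<Sum>v\<in>V. z v * c v) < 0"
proof -
  define z where "z v = (\<Sum>u\<in>V. y' u * A x u) * y v - \<alpha> * y' v" for v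
  have lin: "(\<Sum>v\<in>V. f v * (p * g v - q * k v)) = p * (\<Sum>v\<in>V. f v * g v) - q * (\<Sum>v\<in>V. f v * k v)"
    for f g k :: "'v \<Rightarrow> real" and p q :: real
    by (simp add: sum_distrib_left sum_subtractf algebra_simps)
  have z: "(\<Sum>v\<in>V. z v * w v) = (\<Sum>v\<in>V. y' v * ((\<Sum>u\<in>V. y u * w u) * A x v - \<alpha> * w v))" for w
    using lin[of w "\<Sum>u\<in>V. y' u * A x u" y \<alpha> y'] lin[of y' "\<Sum>u\<in>V. y u * w u" "A x" \<alpha> w]
    by (simp add: z_def mult.commute)
  have "0 \<le> (\<Sum>v\<in>V. z v * A i v)" if "i \<in> insert x F" for i
    using that assms(1,2) by (auto simp: z)
  moreover have "(\<Sum>v\<in>V. z v * c v) < 0"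
    using assms(3) by (simp add: z)
  ultimately show ?thesis by blast
qed

lemma farkas_lift_solution:
  fixes A :: "'i \<Rightarrow> 'v \<Rightarrow> real" and c y :: "'v \<Rightarrow> real" and l :: "'i \<Rightarrow> real" and \<alpha> :: real
  assumes \<alpha>: "\<alpha> = (\<Sum>v\<in>V. y v * A x v)" "\<alpha> < 0"
    and F: "finite F" "x \<notin> F"
    and y: "\<forall>i\<in>F. 0 \<le> (\<Sum>v\<in>V. y v * A i v)" "(\<Sum>v\<in>V. y v * c v) < 0"
    and l: "\<forall>i\<in>F. 0 \<le> l i"
      "\<forall>v\<in>V. (\<Sum>i\<in>F. l i * ((\<Sum>u\<in>V. y u * A i u) * A x v - \<alpha> * A i v))
              = (\<Sum>u\<in>V. y u * c u) * A x v - \<alpha> * c v"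
  shows "\<exists>l'. (\<forall>i\<in>insert x F. 0 \<le> l' i) \<and> (\<forall>v\<in>V. (\<Sum>i\<in>insert x F. l' i * A i v) = c v)"
proof -
  define t where "t = ((\<Sum>i\<in>F. l i * (\<Sum>u\<in>V. y u * A i u)) - (\<Sum>u\<in>V. y u * c u)) / - \<alpha>"
  have "0 \<le> (\<Sum>i\<in>F. l i * (\<Sum>u\<in>V. y u * A i u))"
    using y(1) l(1) by (auto intro!: sum_nonneg)
  then have "0 \<le> t"
    using \<alpha>(2) y(2) unfolding t_def by (intro divide_nonneg_pos) auto
  moreover have "(\<Sum>i\<in>insert x F. (l(x := t)) i * A i v) = c v" if "v \<in> V" for v
  proof -
    have split: "(\<Sum>i\<in>F. l i * (Y i * p - \<alpha> * B i)) = (\<Sum>i\<in>F. l i * Y i) * p - \<alpha> * (\<Sum>i\<in>F. l i * B i)"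
      for Y B :: "'i \<Rightarrow> real" and p
      by (simp add: sum_subtractf sum_distrib_left sum_distrib_right algebra_simps)
    have solve: "X = q - (S - Q) / - \<alpha> * p" if "S * p - \<alpha> * X = Q * p - \<alpha> * q" for S Q X p q :: real
      using that \<alpha>(2) by (simp add: field_simps)
    have "(\<Sum>i\<in>F. l i * A i v) = c v - t * A x v"
      using l(2) that unfolding t_def split by (intro solve) simp
    moreover have "(\<Sum>i\<in>F. (l(x := t)) i * A i v) = (\<Sum>i\<in>F. l i * A i v)"
      using F(2) by (intro sum.cong) auto
    ultimately show ?thesis
      using F by simp
  qed
  ultimately show ?thesis
    using l(1) by (intro exI[of _ "l(x := t)"]) auto
qed

lemma farkas_alternative:
  fixes A :: "'i \<Rightarrow> 'v \<Rightarrow> real" and c :: "'v \<Rightarrow> real"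
  assumes "finite V" "finite I"
  shows "(\<exists>l. (\<forall>i\<in>I. 0 \<le> l i) \<and> (\<forall>v\<in>V. (\<Sum>i\<in>I. l i * A i v) = c v))
       \<or> (\<exists>y. (\<forall>i\<in>I. 0 \<le> (\<Sum>v\<in>V. y v * A i v)) \<and> (\<Sum>v\<in>V. y v * c v) < 0)"
  using assms(2)
proof (induction I arbitrary: A c rule: finite_induct)
  case empty
  show ?case
  proof (cases "\<forall>v\<in>V. c v = 0")
    case False
    then obtain v where "v \<in> V" "c v \<noteq> 0" by blast
    then have "0 < (\<Sum>v\<in>V. c v * c v)"
      using assms(1) by (intro sum_pos2) (auto simp: zero_less_mult_iff)
    then show ?thesis
      by (intro disjI2 exI[of _ "\<lambda>v. - c v"]) (simp add: sum_negf)
  qed simp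
next
  case (insert x F)
  consider (solvable) l where "\<forall>i\<in>F. 0 \<le> l i" "\<forall>v\<in>V. (\<Sum>i\<in>F. l i * A i v) = c v"
    | (certificate) y where "\<forall>i\<in>F. 0 \<le> (\<Sum>v\<in>V. y v * A i v)" "(\<Sum>v\<in>V. y v * c v) < 0"
    using insert.IH by blast
  then show ?case
  proof cases
    case solvable
    have "(\<Sum>i\<in>F. (l(x := 0)) i * A i v) = (\<Sum>i\<in>F. l i * A i v)" for v
      using insert.hyps by (intro sum.cong) auto
    then show ?thesis
      using solvable insert.hyps by (intro disjI1 exI[of _ "l(x := 0)"]) auto
  next
    case certificate
    define \<alpha> where "\<alpha> = (\<Sum>v\<in>V. y v * A x v)"
    show ?thesis
    proof (cases "0 \<le> \<alpha>")
      case True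
      then show ?thesis
        using certificate by (intro disjI2 exI[of _ y]) (auto simp: \<alpha>_def)
    next
      case False
      then have "\<alpha> < 0"
        by simp
      \<comment> \<open>Fourier-Motzkin elimination of column x; the projected columns are orthogonal to y.\<close>
      from insert.IH[of "\<lambda>i v. (\<Sum>u\<in>V. y u * A i u) * A x v - \<alpha> * A i v"
                        "\<lambda>v. (\<Sum>u\<in>V. y u * c u) * A x v - \<alpha> * c v"]
      show ?thesis
        using farkas_lift_solution[where V = V and y = y and A = A and x = x and c = c,
              OF \<alpha>_def \<open>\<alpha> < 0\<close> insert.hyps certificate]
          farkas_lift_certificate[where V = V and y = y and A = A and x = x and c = c, OF \<alpha>_def]
        by blast
    qed
  qed
qed

section \<open>Averages, bands and sorted enumerations\<close>

lemma exists_le_average: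
  fixes f :: "'b \<Rightarrow> real"
  assumes "finite S" "S \<noteq> {}"
  shows "\<exists>x\<in>S. real (card S) * f x \<le> sum f S"
proof (rule ccontr)
  assume "\<not> ?thesis"
  then have "(\<Sum>x\<in>S. sum f S) < (\<Sum>x\<in>S. real (card S) * f x)"
    using assms by (intro sum_strict_mono) auto
  then show False
    by (simp add: sum_distrib_left)
qed

lemma sum_lessThan_mult_div:
  fixes f :: "nat \<Rightarrow> 'b::semiring_1"
  shows "(\<Sum>k<n * q. f (k div q)) = of_nat q * (\<Sum>k<n. f k)"
proof -
  have "(\<Sum>k\<in>{m*q..<m*q+q}. f (k div q)) = of_nat q * f m" for m
  proof -
    have "(\<Sum>k\<in>{m*q..<m*q+q}. f (k div q)) = (\<Sum>k\<in>{m*q..<m*q+q}. f m)"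
      by (intro sum.cong refl arg_cong[where f = f] div_nat_eqI) (auto simp: mult.commute)
    then show ?thesis
      by simp
  qed
  then show ?thesis
    by (simp flip: sum.nat_group add: sum_distrib_left)
qed

lemma bij_betw_rotate: "bij_betw (\<lambda>s. (t + s) mod r) {..<r} {..<(r::nat)}"
proof -
  have "inj_on (\<lambda>s. (t + s) mod r) {..<r}"
  proof
    fix s s' :: nat
    assume "s \<in> {..<r}" "s' \<in> {..<r}" "(t + s) mod r = (t + s') mod r"
    moreover from this(3) have "s mod r = s' mod r"
      by (simp add: nat_mod_eq_iff)
    ultimately show "s = s'"
      by simp
  qed
  moreover have "(\<lambda>s. (t + s) mod r) ` {..<r} \<subseteq> {..<r}"
    by auto
  ultimately show ?thesis
    by (simp add: bij_betw_def endo_inj_surj)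
qed

lemma sum_rotate: "(\<Sum>s<r. g ((t + s) mod r)) = (\<Sum>j<(r::nat). g j)"
  using sum.reindex_bij_betw[OF bij_betw_rotate] .

lemma sum_consecutive_intervals:
  fixes f :: "nat \<Rightarrow> 'b::comm_monoid_add" and bd :: "nat \<Rightarrow> nat"
  assumes "mono bd"
  shows "(\<Sum>t<r. sum f {bd t..<bd (Suc t)}) = sum f {bd 0..<bd r}"
proof (induction r)
  case (Suc r)
  have "bd 0 \<le> bd r" "bd r \<le> bd (Suc r)"
    using assms by (simp_all add: monoD)
  with Suc show ?case
    by (simp add: sum.atLeastLessThan_concat)
qed simp

definition band :: "nat \<Rightarrow> nat \<Rightarrow> nat \<Rightarrow> nat \<Rightarrow> nat set" where
  "band r L N t = {t * L..<(if Suc t < r then Suc t * L else N)}"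

lemma band_bounds:
  assumes "(r - 1) * L < N" "0 < L" "t < r"
  shows "band r L N t \<noteq> {}" "k \<in> band r L N t \<Longrightarrow> t * L \<le> k \<and> k < N"
proof -
  have below: "s * L < N" if "s < r" for s
    using mult_le_mono1[of s "r - 1" L] that assms(1) by linarith
  have "t * L < (if Suc t < r then Suc t * L else N)" "(if Suc t < r then Suc t * L else N) \<le> N"
    using below[of t] below[of "Suc t"] assms(2,3) by auto
  then show "band r L N t \<noteq> {}" "k \<in> band r L N t \<Longrightarrow> t * L \<le> k \<and> k < N"
    by (auto simp: band_def)
qed

lemma sum_bands:
  fixes f :: "nat \<Rightarrow> 'b::comm_monoid_add"
  assumes "(r - 1) * L \<le> N" "0 < r"
  shows "(\<Sum>t<r. sum f (band r L N t)) = sum f {..<N}"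
proof -
  define bd where "bd t = (if t < r then t * L else N)" for t
  have "t * L \<le> N" if "t < r" for t
    using mult_le_mono1[of t "r - 1" L] that assms(1) by linarith
  then have "mono bd"
    by (auto intro!: monoI simp: bd_def)
  have "(\<Sum>t<r. sum f (band r L N t)) = (\<Sum>t<r. sum f {bd t..<bd (Suc t)})"
    by (intro sum.cong) (auto simp: band_def bd_def)
  also have "\<dots> = sum f {bd 0..<bd r}"
    by (rule sum_consecutive_intervals[OF \<open>mono bd\<close>])
  also have "\<dots> = sum f {..<N}"
    using assms(2) by (simp add: bd_def atLeast0LessThan)
  finally show ?thesis .
qed

lemma band_weight:
  fixes a b :: real and r p q n :: nat
  defines "h \<equiv> a + (real r - 1) * b"
  assumes "real p * h = b * real q" "(r - 1) * p < q" "0 < n" "t < r"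
  shows "(if t = r - 1 then a else b) = h / (real n * real q) * real (card (band r (p * n) (n * q) t))"
proof -
  have "0 < q"
    using assms(3) by simp
  show ?thesis
  proof (cases "t = r - 1")
    case True
    have "(r - 1) * (p * n) \<le> n * q"
      using assms(3) by simp
    then have card: "real (card (band r (p * n) (n * q) t)) = real n * real q - (real r - 1) * real p * real n"
      using True assms(5) by (simp add: band_def of_nat_diff algebra_simps)
    have "h / (real n * real q) * real (card (band r (p * n) (n * q) t)) = h - (real r - 1) * (real p * h) / real q"
      unfolding card using \<open>0 < n\<close> \<open>0 < q\<close> by (simp add: field_simps)
    also have "\<dots> = a"
      using assms(2) \<open>0 < q\<close> by (simp add: h_def)
    finally show ?thesis
      using True by simp
  next
    case False
    then have "Suc t < r"
      using assms(5) by simp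
    then have "card (band r (p * n) (n * q) t) = p * n"
      by (simp add: band_def)
    then show ?thesis
      using False assms(2,4) \<open>0 < q\<close> by (simp add: field_simps)
  qed
qed

lemma exists_sorted_enumeration:
  assumes "finite S"
  shows "\<exists>xs. distinct xs \<and> set xs = S \<and> sorted (map f xs)"
proof -
  obtain xs where "distinct xs" "set xs = S"
    using assms finite_distinct_list by blast
  then show ?thesis
    by (intro exI[of _ "sort_key f xs"]) auto
qed

lemma card_le_nth_sorted:
  assumes "distinct xs" "sorted (map f xs)" "i < length xs"
  shows "Suc i \<le> card {z \<in> set xs. f z \<le> f (xs ! i)}"
proof -
  have "(!) xs ` {..i} \<subseteq> {z \<in> set xs. f z \<le> f (xs ! i)}"
    using assms(2,3) by (auto simp: sorted_iff_nth_mono)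
  moreover have "card ((!) xs ` {..i}) = Suc i"
    using assms(1,3) by (simp add: card_image inj_on_nth)
  ultimately show ?thesis
    by (metis (no_types, lifting) card_mono finite_set finite_subset mem_Collect_eq subsetI)
qed

lemma card_le_quantile:
  fixes y :: "'a \<Rightarrow> real"
  assumes "distinct xs" "sorted (map y xs)" "length xs = n" "k < n * q" "l * q \<le> k"
  shows "l < card {z \<in> set xs. y z \<le> y (xs ! (k div q))}"
proof -
  have "0 < q"
    using assms(4) by (cases q) auto
  then have "k div q < n" "l < Suc (k div q)"
    using assms(4,5) by (simp_all add: div_less_iff_less_mult less_Suc_eq_le less_eq_div_iff_mult_less_eq)
  then show ?thesis
    using card_le_nth_sorted[OF assms(1,2)] assms(3) by (meson order_less_le_trans)
qed

lemma sum_repeated_enumeration: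
  fixes y :: "'a \<Rightarrow> real"
  assumes "distinct xs" "set xs = S" "length xs = n"
  shows "(\<Sum>k<n * q. y (xs ! (k div q))) = real q * sum y S"
proof -
  have "(\<Sum>k<n * q. y (xs ! (k div q))) = real q * (\<Sum>i<n. y (xs ! i))"
    by (rule sum_lessThan_mult_div)
  also have "(\<Sum>i<n. y (xs ! i)) = sum y S"
    using assms sum.distinct_set_conv_list[of xs y] by (simp add: sum_list_sum_nth atLeast0LessThan)
  finally show ?thesis .
qed

lemma Rats_pos_cases:
  assumes "x \<in> \<rat>" "0 < x"
  obtains p q :: nat where "0 < p" "0 < q" "x = real p / real q"
proof -
  obtain a b :: int where "0 < b" "x = of_int a / of_int b"
    using Rats_cases'[OF assms(1)] by metis
  moreover from this have "0 < a"
    using assms(2) by (simp add: zero_less_divide_iff)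
  ultimately show ?thesis
    using that[of "nat a" "nat b"] by simp
qed

lemma ratio_fraction_bounds:
  fixes a b :: real and r p q m n :: nat
  defines "h \<equiv> a + (real r - 1) * b"
  assumes "0 < r" "0 < a" "0 \<le> b"
    and pq: "b / h = real p / real q" "0 < q" and m: "real m \<le> b / h * real n"
  shows "real p * h = b * real q" "(r - 1) * p < q" "m * q \<le> p * n"
proof -
  have "0 < h"
    using \<open>0 < r\<close> \<open>0 < a\<close> \<open>0 \<le> b\<close> by (simp add: h_def add_pos_nonneg)
  then show ph: "real p * h = b * real q"
    using pq by (simp add: field_simps)
  have "(real r - 1) * b * real q < h * real q"
    using \<open>0 < a\<close> pq(2) by (simp add: h_def)
  also have "(real r - 1) * b * real q = real ((r - 1) * p) * h"
    using ph \<open>0 < r\<close> by (simp add: of_nat_diff algebra_simps)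
  finally have "real ((r - 1) * p) * h < real q * h"
    by (simp add: mult.commute)
  then show "(r - 1) * p < q"
    using \<open>0 < h\<close> by (metis mult_less_cancel_right_pos of_nat_less_iff)
  have "real (m * q) \<le> real (p * n)"
    using m pq \<open>0 < h\<close> by (simp add: field_simps)
  then show "m * q \<le> p * n"
    by linarith
qed

section \<open>Cliques in balanced multipartite graphs\<close>

lemma balanced_r_partiteD:
  assumes "balanced_r_partite Vs E r n P"
  shows "finite Vs" "\<And>u v. E u v \<Longrightarrow> E v u"
    and "\<And>i. i < r \<Longrightarrow> P i \<subseteq> Vs" "\<And>i. i < r \<Longrightarrow> finite (P i)"
      "\<And>i. i < r \<Longrightarrow> card (P i) = n"
    and "\<And>i j. i < r \<Longrightarrow> j < r \<Longrightarrow> i \<noteq> j \<Longrightarrow> P i \<inter> P j = {}"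
    and "sum f Vs = (\<Sum>i<r. sum f (P i))"
proof -
  show fin: "finite Vs" and "\<And>u v. E u v \<Longrightarrow> E v u"
    using assms by (auto simp: balanced_r_partite_def simple_graph_def)
  show PV: "\<And>i. i < r \<Longrightarrow> P i \<subseteq> Vs" and "\<And>i. i < r \<Longrightarrow> card (P i) = n"
    and dj: "\<And>i j. i < r \<Longrightarrow> j < r \<Longrightarrow> i \<noteq> j \<Longrightarrow> P i \<inter> P j = {}"
    using assms by (auto simp: balanced_r_partite_def)
  show finP: "\<And>i. i < r \<Longrightarrow> finite (P i)"
    using PV fin finite_subset by blast
  have "Vs = (\<Union>i<r. P i)"
    using assms by (simp add: balanced_r_partite_def)
  then show "sum f Vs = (\<Sum>i<r. sum f (P i))"
    using finP dj by (simp add: sum.UNION_disjoint)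
qed

lemma balanced_r_partite_pos_card:
  assumes "balanced_r_partite Vs E r n P" "Vs \<noteq> {}"
  shows "0 < n"
proof (rule ccontr)
  assume "\<not> 0 < n"
  then have "P i = {}" if "i < r" for i
    using balanced_r_partiteD(4,5)[OF assms(1) that] by simp
  then have "Vs = {}"
    using balanced_r_partiteD(7)[OF assms(1), of "\<lambda>_. 1 :: nat"] balanced_r_partiteD(1)[OF assms(1)] by simp
  with assms(2) show False
    by simp
qed

lemma card_non_neighbours_le:
  assumes G: "balanced_r_partite Vs E r n P" and "2 \<le> r" "0 < n"
    and ij: "i < r" "j < r" "i \<noteq> j" "v \<in> P i"
  shows "card {u \<in> P j. \<not> E v u} \<le> n - delta_star E r P"
proof -
  let ?Q = "\<lambda>m. \<forall>i<r. \<forall>j<r. i \<noteq> j \<longrightarrow> (\<forall>v\<in>P i. m \<le> card {u \<in> P j. E v u})"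
  \<comment> \<open>For n = 0 every m satisfies ?Q and GREATEST is unspecified; a nonempty class bounds it by n.\<close>
  have "?Q (delta_star E r P)"
    unfolding delta_star_def
  proof (rule GreatestI_nat[where k = 0 and b = n])
    fix m assume "?Q m"
    obtain v0 where "v0 \<in> P 0"
      using balanced_r_partiteD(5)[OF G, of 0] \<open>2 \<le> r\<close> \<open>0 < n\<close> by fastforce
    then have "m \<le> card {u \<in> P 1. E v0 u}"
      using \<open>?Q m\<close>[rule_format, of 0 1 v0] \<open>2 \<le> r\<close> by simp
    also have "\<dots> \<le> card (P 1)"
      using balanced_r_partiteD(4)[OF G, of 1] \<open>2 \<le> r\<close> by (intro card_mono) auto
    finally show "m \<le> n"
      using balanced_r_partiteD(5)[OF G, of 1] \<open>2 \<le> r\<close> by simp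
  qed simp
  then have "delta_star E r P \<le> card {u \<in> P j. E v u}"
    using ij by blast
  moreover have "{u \<in> P j. \<not> E v u} = P j - {u \<in> P j. E v u}"
    by auto
  then have "card {u \<in> P j. \<not> E v u} = n - card {u \<in> P j. E v u}"
    using balanced_r_partiteD(4,5)[OF G ij(2)] by (simp add: card_Diff_subset)
  ultimately show ?thesis
    by simp
qed

lemma greedy_clique_transversal:
  fixes P T :: "nat \<Rightarrow> 'a set" and c :: "nat \<Rightarrow> nat"
  assumes P: "\<And>i. i < r \<Longrightarrow> finite (P i)"
    and nonadj: "\<And>i j v. i < r \<Longrightarrow> j < r \<Longrightarrow> i \<noteq> j \<Longrightarrow> v \<in> P i \<Longrightarrow>
      card {u \<in> P j. \<not> E v u} \<le> m"
    and c: "\<And>t. t < r \<Longrightarrow> c t < r" "inj_on c {..<r}"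
    and T: "\<And>t. t < r \<Longrightarrow> T t \<subseteq> P (c t)" "\<And>t. t < r \<Longrightarrow> t * m < card (T t)"
  shows "k \<le> r \<Longrightarrow> \<exists>v. \<forall>t<k. v t \<in> T t \<and> (\<forall>s<t. E (v s) (v t))"
proof (induction k)
  case (Suc k)
  then obtain v where v: "\<forall>t<k. v t \<in> T t \<and> (\<forall>s<t. E (v s) (v t))"
    by auto
  have k: "k < r"
    using Suc.prems by simp
  define C where "C = {z \<in> T k. \<forall>s<k. E (v s) z}"
  have "T k - C \<subseteq> (\<Union>s<k. {u \<in> P (c k). \<not> E (v s) u})"
    using T(1)[OF k] by (auto simp: C_def)
  then have "card (T k - C) \<le> card (\<Union>s<k. {u \<in> P (c k). \<not> E (v s) u})"
    using P c(1) k by (intro card_mono) auto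
  also have "\<dots> \<le> (\<Sum>s<k. card {u \<in> P (c k). \<not> E (v s) u})"
    by (rule card_UN_le) simp
  also have "\<dots> \<le> (\<Sum>s<k. m)"
  proof (intro sum_mono)
    fix s assume "s \<in> {..<k}"
    then have "c s \<noteq> c k" "v s \<in> P (c s)"
      using c(2) k v T(1)[of s] by (auto dest: inj_onD)
    then show "card {u \<in> P (c k). \<not> E (v s) u} \<le> m"
      using nonadj[of "c s" "c k" "v s"] c(1) k \<open>s \<in> {..<k}\<close> by simp
  qed
  also have "\<dots> < card (T k)"
    using T(2)[OF k] by (simp add: mult.commute)
  finally have "C \<noteq> {}"
    by (metis Diff_empty less_irrefl)
  then obtain z where "z \<in> T k" "\<forall>s<k. E (v s) z"
    by (auto simp: C_def)
  with v show ?case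
    by (intro exI[of _ "v(k := z)"]) (auto simp: less_Suc_eq)
qed simp

lemma rooted_copy_of_clique_transversal:
  assumes G: "balanced_r_partite Vs E r n P" and "0 < r"
    and c: "\<And>t. t < r \<Longrightarrow> c t < r" "inj_on c {..<r}"
    and v: "\<And>t. t < r \<Longrightarrow> v t \<in> P (c t)" "\<And>s t. s < t \<Longrightarrow> t < r \<Longrightarrow> E (v s) (v t)"
  shows "v ` {..<r} \<subseteq> Vs" "inj_on v {..<r}" "(v (r - 1), v ` {..<r}) \<in> rooted_Kr_copies Vs E r"
proof -
  show sub: "v ` {..<r} \<subseteq> Vs"
    using v(1) c(1) balanced_r_partiteD(3)[OF G] by blast
  show inj: "inj_on v {..<r}"
  proof
    fix s t assume st: "s \<in> {..<r}" "t \<in> {..<r}" "v s = v t"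
    show "s = t"
    proof (rule ccontr)
      assume "s \<noteq> t"
      then have "P (c s) \<inter> P (c t) = {}"
        using balanced_r_partiteD(6)[OF G] c st by (auto dest: inj_onD)
      with st v(1)[of s] v(1)[of t] show False
        by auto
    qed
  qed
  have "E (v s) (v t)" if "s < r" "t < r" "s \<noteq> t" for s t
    using v(2) balanced_r_partiteD(2)[OF G] that by (metis linorder_neqE_nat)
  then show "(v (r - 1), v ` {..<r}) \<in> rooted_Kr_copies Vs E r"
    using sub inj \<open>0 < r\<close> by (auto simp: rooted_Kr_copies_def card_image)
qed

lemma sum_wchar_image:
  fixes y :: "'a \<Rightarrow> real"
  assumes "finite Vs" "v ` {..<r} \<subseteq> Vs" "inj_on v {..<r}" "\<rho> < r"
  shows "(\<Sum>u\<in>Vs. y u * wchar a b (v \<rho>, v ` {..<r}) u) = (\<Sum>t<r. (if t = \<rho> then a else b) * y (v t))"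
proof -
  have "(\<Sum>u\<in>Vs. y u * wchar a b (v \<rho>, v ` {..<r}) u) = (\<Sum>u\<in>v ` {..<r}. y u * wchar a b (v \<rho>, v ` {..<r}) u)"
    using assms(1,2,4) by (intro sum.mono_neutral_right) (auto simp: wchar_def)
  also have "\<dots> = (\<Sum>t<r. y (v t) * wchar a b (v \<rho>, v ` {..<r}) (v t))"
    using assms(3) by (simp add: sum.reindex)
  also have "\<dots> = (\<Sum>t<r. (if t = \<rho> then a else b) * y (v t))"
    using assms(3,4) by (intro sum.cong) (auto simp: wchar_def dest: inj_onD)
  finally show ?thesis .
qed

lemma exists_rooted_copy_below_thresholds:
  fixes y :: "'a \<Rightarrow> real" and Y :: "nat \<Rightarrow> real"
  assumes G: "balanced_r_partite Vs E r n P" and "0 < r"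
    and nonadj: "\<And>i j v. i < r \<Longrightarrow> j < r \<Longrightarrow> i \<noteq> j \<Longrightarrow> v \<in> P i \<Longrightarrow>
      card {u \<in> P j. \<not> E v u} \<le> m"
    and c: "\<And>t. t < r \<Longrightarrow> c t < r" "inj_on c {..<r}"
    and "0 \<le> a" "0 \<le> b"
    and Y: "\<And>t. t < r \<Longrightarrow> t * m < card {z \<in> P (c t). y z \<le> Y t}"
  shows "\<exists>K\<in>rooted_Kr_copies Vs E r.
           (\<Sum>u\<in>Vs. y u * wchar a b K u) \<le> (\<Sum>t<r. (if t = r - 1 then a else b) * Y t)"
proof -
  have "\<exists>v. \<forall>t<r. v t \<in> {z \<in> P (c t). y z \<le> Y t} \<and> (\<forall>s<t. E (v s) (v t))"
    by (rule greedy_clique_transversal[where P = P and c = c and T = "\<lambda>t. {z \<in> P (c t). y z \<le> Y t}"])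
      (use balanced_r_partiteD(4)[OF G] nonadj c Y in auto)
  then obtain v where v: "\<forall>t<r. v t \<in> {z \<in> P (c t). y z \<le> Y t} \<and> (\<forall>s<t. E (v s) (v t))"
    by blast
  then have copy: "v ` {..<r} \<subseteq> Vs" "inj_on v {..<r}" "(v (r - 1), v ` {..<r}) \<in> rooted_Kr_copies Vs E r"
    using rooted_copy_of_clique_transversal[OF G \<open>0 < r\<close> c, of v] by auto
  have "(\<Sum>u\<in>Vs. y u * wchar a b (v (r - 1), v ` {..<r}) u) = (\<Sum>t<r. (if t = r - 1 then a else b) * y (v t))"
    using sum_wchar_image[OF balanced_r_partiteD(1)[OF G] copy(1,2)] \<open>0 < r\<close> by simp
  also have "\<dots> \<le> (\<Sum>t<r. (if t = r - 1 then a else b) * Y t)"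
    using v \<open>0 \<le> a\<close> \<open>0 \<le> b\<close> by (intro sum_mono mult_left_mono) auto
  finally show ?thesis
    using copy(3) by blast
qed

section \<open>The dual bound\<close>

lemma exists_rotation_below_average:
  fixes F :: "nat \<Rightarrow> nat \<Rightarrow> real" and B :: "nat \<Rightarrow> nat set" and w :: "nat \<Rightarrow> real"
  assumes "0 < r" and B: "\<And>t. t < r \<Longrightarrow> finite (B t)" "\<And>t. t < r \<Longrightarrow> B t \<noteq> {}"
    and w: "\<And>t. t < r \<Longrightarrow> w t = \<kappa> * real (card (B t))" and "0 \<le> \<kappa>"
  shows "\<exists>\<sigma><r. \<exists>k. (\<forall>t<r. k t \<in> B t) \<and>
           real r * (\<Sum>t<r. w t * F ((t + \<sigma>) mod r) (k t)) \<le> \<kappa> * (\<Sum>j<r. \<Sum>t<r. sum (F j) (B t))"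
proof -
  have "\<forall>j t. \<exists>k. t < r \<longrightarrow> k \<in> B t \<and> real (card (B t)) * F j k \<le> sum (F j) (B t)"
    using exists_le_average[OF B] by blast
  then obtain kk where kk: "\<And>j t. t < r \<Longrightarrow>
      kk j t \<in> B t \<and> real (card (B t)) * F j (kk j t) \<le> sum (F j) (B t)"
    by metis
  define R where "R s = (\<Sum>t<r. w t * F ((t + s) mod r) (kk ((t + s) mod r) t))" for s
  have "(\<Sum>s<r. R s) \<le> (\<Sum>s<r. \<Sum>t<r. \<kappa> * sum (F ((t + s) mod r)) (B t))"
    unfolding R_def using kk w \<open>0 \<le> \<kappa>\<close>
    by (intro sum_mono) (simp add: mult.assoc mult_left_mono)
  also have "\<dots> = \<kappa> * (\<Sum>t<r. \<Sum>s<r. sum (F ((t + s) mod r)) (B t))"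
    by (subst sum.swap) (simp add: sum_distrib_left)
  \<comment> \<open>Over all rotations, every class meets every band exactly once.\<close>
  also have "\<dots> = \<kappa> * (\<Sum>j<r. \<Sum>t<r. sum (F j) (B t))"
    by (simp add: sum_rotate[where g = "\<lambda>j. sum (F j) _"] sum.swap[where A = "{..<r}"])
  finally have "(\<Sum>s<r. R s) \<le> \<kappa> * (\<Sum>j<r. \<Sum>t<r. sum (F j) (B t))" .
  moreover obtain \<sigma> where "\<sigma> < r" "real r * R \<sigma> \<le> (\<Sum>s<r. R s)"
    using exists_le_average[of "{..<r}" R] \<open>0 < r\<close> by auto
  ultimately show ?thesis
    using kk unfolding R_def by (intro exI[of _ \<sigma>] conjI exI[of _ "\<lambda>t. kk ((t + \<sigma>) mod r) t"]) auto
qed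

lemma exists_quantile_slots:
  fixes y :: "'a \<Rightarrow> real"
  assumes G: "balanced_r_partite Vs E r n P"
  obtains F :: "nat \<Rightarrow> nat \<Rightarrow> real" where
    "\<And>j. j < r \<Longrightarrow> (\<Sum>k<n * q. F j k) = real q * sum y (P j)"
    "\<And>j k l. j < r \<Longrightarrow> k < n * q \<Longrightarrow> l * q \<le> k \<Longrightarrow> l < card {z \<in> P j. y z \<le> F j k}"
proof -
  obtain xs where xs: "\<And>j. j < r \<Longrightarrow> distinct (xs j) \<and> set (xs j) = P j \<and> sorted (map y (xs j))"
    using exists_sorted_enumeration[OF balanced_r_partiteD(4)[OF G]] by metis
  have len: "\<And>j. j < r \<Longrightarrow> length (xs j) = n"
    using xs balanced_r_partiteD(5)[OF G] distinct_card by metis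
  \<comment> \<open>Slot k of class j holds the (k div q)-th smallest value of y on the class.\<close>
  show ?thesis
  proof (rule that[of "\<lambda>j k. y (xs j ! (k div q))"])
    show "(\<Sum>k<n * q. y (xs j ! (k div q))) = real q * sum y (P j)" if "j < r" for j
      using sum_repeated_enumeration xs[OF that] len[OF that] by blast
    show "l < card {z \<in> P j. y z \<le> y (xs j ! (k div q))}" if "j < r" "k < n * q" "l * q \<le> k" for j k l
      using card_le_quantile[of "xs j" y n k q l] xs[OF that(1)] len[OF that(1)] that(2,3) by simp
  qed
qed

lemma exists_rotation_thresholds:
  fixes y :: "'a \<Rightarrow> real" and a b :: real and r p q m :: nat
  defines "h \<equiv> a + (real r - 1) * b"
  assumes G: "balanced_r_partite Vs E r n P" and "0 < r" "0 < n" "0 \<le> a" "0 \<le> b"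
    and pq: "real p * h = b * real q" "0 < p" "(r - 1) * p < q"
    and mq: "m * q \<le> p * n"
  shows "\<exists>\<sigma><r. \<exists>Y. (\<forall>t<r. t * m < card {z \<in> P ((t + \<sigma>) mod r). y z \<le> Y t})
            \<and> real r * (\<Sum>t<r. (if t = r - 1 then a else b) * Y t) \<le> h / real n * sum y Vs"
proof -
  obtain F where F: "\<And>j. j < r \<Longrightarrow> (\<Sum>k<n * q. F j k) = real q * sum y (P j)"
    "\<And>j k l. j < r \<Longrightarrow> k < n * q \<Longrightarrow> l * q \<le> k \<Longrightarrow> l < card {z \<in> P j. y z \<le> F j k}"
    using exists_quantile_slots[OF G, where q = q and y = y] by blast
  define B where "B = band r (p * n) (n * q)"
  have LN: "(r - 1) * (p * n) < n * q"
    using pq(3) \<open>0 < n\<close> by simp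
  have B: "B t \<noteq> {}" "k \<in> B t \<Longrightarrow> t * (p * n) \<le> k \<and> k < n * q" if "t < r" for t k
    using band_bounds[OF LN _ that] pq(2) \<open>0 < n\<close> by (simp_all add: B_def)
  have "(\<Sum>t<r. sum (F j) (B t)) = real q * sum y (P j)" if "j < r" for j
    using sum_bands[OF less_imp_le[OF LN] \<open>0 < r\<close>, of "F j"] F(1)[OF that] by (simp add: B_def)
  then have total: "(\<Sum>j<r. \<Sum>t<r. sum (F j) (B t)) = real q * sum y Vs"
    by (simp add: balanced_r_partiteD(7)[OF G] sum_distrib_left)
  have weight: "(if t = r - 1 then a else b) = h / (real n * real q) * real (card (B t))" if "t < r" for t
    using band_weight[where a = a and b = b and r = r and p = p and q = q and n = n] pq(1,3) \<open>0 < n\<close> that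
    unfolding h_def B_def by blast
  have "0 \<le> h / (real n * real q)"
    using \<open>0 \<le> a\<close> \<open>0 \<le> b\<close> \<open>0 < r\<close> by (simp add: h_def)
  then have "\<exists>\<sigma><r. \<exists>k. (\<forall>t<r. k t \<in> B t) \<and>
      real r * (\<Sum>t<r. (if t = r - 1 then a else b) * F ((t + \<sigma>) mod r) (k t))
        \<le> h / (real n * real q) * (\<Sum>j<r. \<Sum>t<r. sum (F j) (B t))"
    using \<open>0 < r\<close> B(1) weight by (intro exists_rotation_below_average) (auto simp: B_def band_def)
  then obtain \<sigma> k where \<sigma>: "\<sigma> < r" "\<forall>t<r. k t \<in> B t"
    and avg: "real r * (\<Sum>t<r. (if t = r - 1 then a else b) * F ((t + \<sigma>) mod r) (k t))
                \<le> h / (real n * real q) * (\<Sum>j<r. \<Sum>t<r. sum (F j) (B t))"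
    by blast
  have "t * m < card {z \<in> P ((t + \<sigma>) mod r). y z \<le> F ((t + \<sigma>) mod r) (k t)}" if "t < r" for t
  proof (rule F(2))
    have "t * (m * q) \<le> t * (p * n)"
      using mq by (simp add: mult_le_mono2)
    also have "\<dots> \<le> k t"
      using B(2)[OF that] \<sigma>(2) that by blast
    finally show "t * m * q \<le> k t"
      by (simp add: mult.assoc)
    show "k t < n * q"
      using B(2)[OF that] \<sigma>(2) that by blast
  qed (use \<open>0 < r\<close> in simp)
  moreover have "h / (real n * real q) * (real q * sum y Vs) = h / real n * sum y Vs"
    using pq(3) by simp
  ultimately show ?thesis
    using \<sigma>(1) avg total by (intro exI[of _ \<sigma>] conjI exI[of _ "\<lambda>t. F ((t + \<sigma>) mod r) (k t)"]) auto
qed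

lemma exists_rooted_copy_below_average:
  fixes y :: "'a \<Rightarrow> real" and a b :: real and r :: nat
  defines "h \<equiv> a + (real r - 1) * b"
  assumes G: "balanced_r_partite Vs E r n P" and "2 \<le> r" "0 < n" "0 < a" "a \<le> b"
    and ab: "a \<in> \<rat>" "b \<in> \<rat>" and \<delta>: "(1 - b / h) * real n \<le> real (delta_star E r P)"
  shows "\<exists>K\<in>rooted_Kr_copies Vs E r. (\<Sum>v\<in>Vs. y v * wchar a b K v) \<le> h / (real r * real n) * sum y Vs"
proof -
  define m where "m = n - delta_star E r P"
  have "0 \<le> b" "0 < b"
    using \<open>0 < a\<close> \<open>a \<le> b\<close> by simp_all
  have "0 < h"
    using \<open>2 \<le> r\<close> \<open>0 < a\<close> \<open>0 \<le> b\<close> by (simp add: h_def add_pos_nonneg)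
  then have "b / h \<in> \<rat>" "0 < b / h"
    using ab \<open>0 < b\<close> by (simp_all add: h_def)
  then obtain p q where pq: "0 < p" "0 < q" "b / h = real p / real q"
    by (rule Rats_pos_cases)
  have "real m \<le> b / h * real n"
  proof (cases "delta_star E r P \<le> n")
    case True
    then show ?thesis
      using \<delta> by (simp add: m_def of_nat_diff algebra_simps)
  next
    case False
    then show ?thesis
      using \<open>0 < b\<close> \<open>0 < h\<close> by (simp add: m_def)
  qed
  then have bounds: "real p * h = b * real q" "(r - 1) * p < q" "m * q \<le> p * n"
    using ratio_fraction_bounds[where a = a and b = b and r = r and m = m and n = n] pq
      \<open>2 \<le> r\<close> \<open>0 < a\<close> \<open>0 \<le> b\<close> unfolding h_def by auto
  obtain \<sigma> Y where "\<sigma> < r"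
    and Y: "\<forall>t<r. t * m < card {z \<in> P ((t + \<sigma>) mod r). y z \<le> Y t}"
    and avg: "real r * (\<Sum>t<r. (if t = r - 1 then a else b) * Y t) \<le> h / real n * sum y Vs"
    using exists_rotation_thresholds[where y = y, OF G _ \<open>0 < n\<close> _ \<open>0 \<le> b\<close>
        bounds(1)[unfolded h_def] pq(1) bounds(2,3)]
      \<open>2 \<le> r\<close> \<open>0 < a\<close> unfolding h_def by auto
  have rot: "\<And>t. t < r \<Longrightarrow> (t + \<sigma>) mod r < r" "inj_on (\<lambda>t. (t + \<sigma>) mod r) {..<r}"
    using bij_betw_rotate[of \<sigma> r] \<open>\<sigma> < r\<close> by (auto simp: bij_betw_def add.commute)
  have "\<exists>K\<in>rooted_Kr_copies Vs E r.
      (\<Sum>v\<in>Vs. y v * wchar a b K v) \<le> (\<Sum>t<r. (if t = r - 1 then a else b) * Y t)"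
    by (rule exists_rooted_copy_below_thresholds[where P = P and n = n and m = m and c = "\<lambda>t. (t + \<sigma>) mod r"])
      (use G \<open>2 \<le> r\<close> \<open>0 < n\<close> \<open>0 < a\<close> \<open>0 \<le> b\<close> card_non_neighbours_le[OF G] rot Y
        in \<open>auto simp: m_def\<close>)
  moreover have "(\<Sum>t<r. (if t = r - 1 then a else b) * Y t) \<le> h / (real r * real n) * sum y Vs"
    using avg \<open>\<sigma> < r\<close> \<open>0 < n\<close> by (simp add: field_simps)
  ultimately show ?thesis
    by (meson order_trans)
qed

lemma perfect_tiling_by_duality:
  fixes a b :: real
  assumes "finite Vs"
    and "\<And>y. sum y Vs < 0 \<Longrightarrow> \<exists>K\<in>rooted_Kr_copies Vs E r. (\<Sum>v\<in>Vs. y v * wchar a b K v) < 0"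
  shows "\<exists>w. perfect_weighted_fractional_tiling Vs E r a b w"
proof -
  have "rooted_Kr_copies Vs E r \<subseteq> Vs \<times> Pow Vs"
    by (auto simp: rooted_Kr_copies_def)
  then have "finite (rooted_Kr_copies Vs E r)"
    using assms(1) finite_subset by blast
  from farkas_alternative[OF assms(1) this, of "wchar a b" "\<lambda>_. 1"] show ?thesis
    using assms(2) unfolding perfect_weighted_fractional_tiling_def by fastforce
qed

theorem lemma2p2:
  fixes Vs :: "'a set" and E :: "'a \<Rightarrow> 'a \<Rightarrow> bool" and r n :: nat
    and P :: "nat \<Rightarrow> 'a set" and a b :: real
  assumes "r \<ge> 3"
    and "a \<in> \<rat>" and "b \<in> \<rat>" and "0 < a" and "a \<le> b"
    and "balanced_r_partite Vs E r n P"
    and "real (delta_star E r P) \<ge> (1 - b / (a + (real r - 1) * b)) * real n"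
  shows "\<exists>w. perfect_weighted_fractional_tiling Vs E r a b w"
proof (rule perfect_tiling_by_duality)
  show "finite Vs"
    using balanced_r_partiteD(1)[OF assms(6)] .
next
  fix y :: "'a \<Rightarrow> real"
  assume "sum y Vs < 0"
  then have "0 < n"
    using balanced_r_partite_pos_card[OF assms(6)] by force
  have "\<exists>K\<in>rooted_Kr_copies Vs E r.
      (\<Sum>v\<in>Vs. y v * wchar a b K v) \<le> (a + (real r - 1) * b) / (real r * real n) * sum y Vs"
    using exists_rooted_copy_below_average[where y = y, OF assms(6) _ \<open>0 < n\<close> assms(4,5,2,3,7)] assms(1)
    by simp
  moreover have "0 < (a + (real r - 1) * b) / (real r * real n)"
    using assms(1,4,5) \<open>0 < n\<close> by (simp add: add_pos_nonneg)
  then have "(a + (real r - 1) * b) / (real r * real n) * sum y Vs < 0"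
    using \<open>sum y Vs < 0\<close> by (rule mult_pos_neg)
  ultimately show "\<exists>K\<in>rooted_Kr_copies Vs E r. (\<Sum>v\<in>Vs. y v * wchar a b K v) < 0"
    by (meson le_less_trans)
qed

end
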